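(* Let $n \geq 2$ be a power of 2. Then $\mathsf{QNAADT}(\mathsf{ADDR}_n) = \Theta(n)$.
   Context: $\mathsf{ADDR}_n:\{0,1\}^{\log n+n}\to\{0,1\}$ is $\mathsf{ADDR}_n(x,y)=y_{\mathsf{bin}(x)}$ for $x\in\{0,1\}^{\log n}$, $y\in\{0,1\}^n$, where $\mathsf{bin}(x)\in[n]$ is the integer whose binary representation is $x$. $\mathsf{AND}_S(z)=\prod_{i\in S}z_i$. A quantum non-adaptive AND decision tree of cost $c$ for a function on $m$ bits works on $|S_1,\dots,S_c\rangle|b\rangle|w\rangle$ with $S_j\subseteq[m]$, $b\in\{0,1\}^c$, arbitrary workspace; it starts from an input-independent state $|\psi\rangle$, applies once the oracle $O_z$ mapping $|S_1,\dots,S_c\rangle|b_1,\dots,b_c\rangle|w\rangle$ to $|S_1,\dots,S_c\rangle|b_1\oplus\mathsf{AND}_{S_1}(z),\dots,b_c\oplus\mathsf{AND}_{S_c}(z)\rangle|w\rangle$, and accepts with probability $\|\Pi O_z|\psi\rangle\|^2$ for a fixed projector $\Pi$; $\mathsf{QNAADT}(f)$ is the minimum cost of one computing $f$ with success probability at least $2/3$ on every input. *)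

theory Defs
  imports Complex_Main
begin

(* Inputs on m bits are bool lists of length m, bit i is z ! i (0-indexed). *)
definition AND_S :: "nat set \<Rightarrow> bool list \<Rightarrow> bool" where
  "AND_S S z = (\<forall>i\<in>S. z ! i)"

(* computational basis |S_1..S_c>|b_1..b_c>|w>, workspace basis {0..<d} *)
type_synonym qbasis = "nat set list \<times> bool list \<times> nat"

definition qbasis_set :: "nat \<Rightarrow> nat \<Rightarrow> nat \<Rightarrow> qbasis set" where
  "qbasis_set m c d = {(Ss, b, w). length Ss = c \<and> (\<forall>S\<in>set Ss. S \<subseteq> {..<m})
                                 \<and> length b = c \<and> w < d}"

(* O_z |S,b,w> = |S, b xor AND_S(z), w>, so (O_z psi)(S,b,w) = psi(S, b xor AND_S(z), w) *)
definition query_op :: "bool list \<Rightarrow> (qbasis \<Rightarrow> complex) \<Rightarrow> qbasis \<Rightarrow> complex" where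
  "query_op z \<psi> = (\<lambda>(Ss, b, w). \<psi> (Ss, map2 (\<noteq>) b (map (\<lambda>S. AND_S S z) Ss), w))"

definition apply_op :: "qbasis set \<Rightarrow> (qbasis \<Rightarrow> qbasis \<Rightarrow> complex) \<Rightarrow> (qbasis \<Rightarrow> complex) \<Rightarrow> qbasis \<Rightarrow> complex" where
  "apply_op B P \<psi> = (\<lambda>x. \<Sum>y\<in>B. P x y * \<psi> y)"

definition is_projector :: "qbasis set \<Rightarrow> (qbasis \<Rightarrow> qbasis \<Rightarrow> complex) \<Rightarrow> bool" where
  "is_projector B P = ((\<forall>x\<in>B. \<forall>y\<in>B. P x y = cnj (P y x)) \<and>
                       (\<forall>x\<in>B. \<forall>y\<in>B. (\<Sum>k\<in>B. P x k * P k y) = P x y))"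

definition sqnorm :: "qbasis set \<Rightarrow> (qbasis \<Rightarrow> complex) \<Rightarrow> real" where
  "sqnorm B \<psi> = (\<Sum>x\<in>B. (cmod (\<psi> x))\<^sup>2)"

definition accept_prob :: "nat \<Rightarrow> nat \<Rightarrow> nat \<Rightarrow> (qbasis \<Rightarrow> complex) \<Rightarrow> (qbasis \<Rightarrow> qbasis \<Rightarrow> complex)
                            \<Rightarrow> bool list \<Rightarrow> real" where
  "accept_prob m c d \<psi> P z =
     sqnorm (qbasis_set m c d) (apply_op (qbasis_set m c d) P (query_op z \<psi>))"

(* there is a quantum non-adaptive AND decision tree of cost c computing f on m bits
   with success probability >= 2/3 on every input *)
definition qnaadt_computes :: "nat \<Rightarrow> (bool list \<Rightarrow> bool) \<Rightarrow> nat \<Rightarrow> bool" where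
  "qnaadt_computes m f c = (\<exists>d \<psi> P.
      sqnorm (qbasis_set m c d) \<psi> = 1 \<and> is_projector (qbasis_set m c d) P \<and>
      (\<forall>z. length z = m \<longrightarrow>
         (if f z then accept_prob m c d \<psi> P z \<ge> 2/3
                 else 1 - accept_prob m c d \<psi> P z \<ge> 2/3)))"

definition QNAADT :: "nat \<Rightarrow> (bool list \<Rightarrow> bool) \<Rightarrow> nat" where
  "QNAADT m f = (LEAST c. qnaadt_computes m f c)"

(* bin: integer with binary representation xs, most significant bit first; value in {0..<2^length xs} *)
definition bin :: "bool list \<Rightarrow> nat" where
  "bin xs = foldl (\<lambda>a bit. 2 * a + of_bool bit) 0 xs"

(* ADDR_n for n = 2^k on k + n bits: x = first k bits, y = last n bits, output y_{bin x} (0-indexed) *)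
definition ADDR :: "nat \<Rightarrow> bool list \<Rightarrow> bool" where
  "ADDR k z = (drop k z) ! bin (take k z)"

end

(* Upper bound: querying each of the k + n input bits with a singleton AND set computes
   every function, at cost k + n < 2n.

   Lower bound, by a hybrid argument: for an address a, the inputs (a, e_a) and (a, 0) must be
   accepted resp. rejected, and the oracle acts identically on them except on basis states
   containing an AND set S that sees the difference, which forces max S = k + a.  Since a
   projector does not increase norms, the squared amplitude of the initial state on such basis
   states is at least 1/100.  A basis state holds only c sets, so it contributes to at most c
   addresses, and summing over the n addresses gives n/100 <= c. *)

theory Submission
  imports Defs "HOL-Analysis.L2_Norm"
begin

definition qnorm :: "qbasis set \<Rightarrow> (qbasis \<Rightarrow> complex) \<Rightarrow> real" where
  "qnorm B u = L2_set (\<lambda>x. cmod (u x)) B"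

lemma sqnorm_eq_qnorm_sq: "sqnorm B u = (qnorm B u)\<^sup>2"
  unfolding sqnorm_def qnorm_def L2_set_def by (simp add: sum_nonneg)

lemma qnorm_nonneg: "0 \<le> qnorm B u"
  unfolding qnorm_def by (rule L2_set_nonneg)

lemma qnorm_add_le: "qnorm B (\<lambda>x. u x + v x) \<le> qnorm B u + qnorm B v"
proof -
  have "qnorm B (\<lambda>x. u x + v x) \<le> L2_set (\<lambda>x. cmod (u x) + cmod (v x)) B"
    unfolding qnorm_def by (rule L2_set_mono) (auto simp: norm_triangle_ineq)
  also have "\<dots> \<le> qnorm B u + qnorm B v"
    unfolding qnorm_def by (rule L2_set_triangle_ineq)
  finally show ?thesis .
qed

lemma apply_op_diff:
  "apply_op B P (\<lambda>y. u y - v y) x = apply_op B P u x - apply_op B P v x"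
  unfolding apply_op_def by (simp add: sum_subtractf right_diff_distrib)

lemma projector_cnj_apply_op:
  assumes "is_projector B P" and "y \<in> B"
  shows "(\<Sum>x\<in>B. cnj (apply_op B P w x) * P x y) = (\<Sum>k\<in>B. cnj (w k) * P k y)"
proof -
  have herm: "cnj (P x k) = P k x" if "x \<in> B" "k \<in> B" for x k
    using assms(1) that unfolding is_projector_def by (metis complex_cnj_cnj)
  have idem: "(\<Sum>x\<in>B. P k x * P x y) = P k y" if "k \<in> B" for k
    using assms that unfolding is_projector_def by blast
  have "(\<Sum>x\<in>B. cnj (apply_op B P w x) * P x y) = (\<Sum>x\<in>B. \<Sum>k\<in>B. cnj (w k) * (P k x * P x y))"
    unfolding apply_op_def cnj_sum sum_distrib_right
    by (intro sum.cong refl) (simp add: herm mult_ac)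
  also have "\<dots> = (\<Sum>k\<in>B. cnj (w k) * (\<Sum>x\<in>B. P k x * P x y))"
    by (subst sum.swap) (simp add: sum_distrib_left)
  also have "\<dots> = (\<Sum>k\<in>B. cnj (w k) * P k y)"
    by (simp add: idem)
  finally show ?thesis .
qed

lemma projector_inner_self:
  assumes "is_projector B P"
  shows "(\<Sum>x\<in>B. cnj (apply_op B P w x) * apply_op B P w x)
       = (\<Sum>k\<in>B. cnj (w k) * apply_op B P w k)"
proof -
  have "(\<Sum>x\<in>B. cnj (apply_op B P w x) * apply_op B P w x)
      = (\<Sum>y\<in>B. (\<Sum>x\<in>B. cnj (apply_op B P w x) * P x y) * w y)"
    unfolding apply_op_def[of B P w] sum_distrib_left sum_distrib_right
    by (subst sum.swap) (simp add: mult_ac)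
  also have "\<dots> = (\<Sum>y\<in>B. (\<Sum>k\<in>B. cnj (w k) * P k y) * w y)"
    using projector_cnj_apply_op[OF assms] by simp
  also have "\<dots> = (\<Sum>k\<in>B. cnj (w k) * apply_op B P w k)"
    unfolding apply_op_def sum_distrib_left sum_distrib_right
    by (subst sum.swap) (simp add: mult_ac)
  finally show ?thesis .
qed

lemma qnorm_apply_projector_le:
  assumes "is_projector B P"
  shows "qnorm B (apply_op B P w) \<le> qnorm B w"
proof -
  define v where "v = apply_op B P w"
  have "(qnorm B v)\<^sup>2 = Re (\<Sum>x\<in>B. cnj (v x) * v x)"
    unfolding sqnorm_eq_qnorm_sq[symmetric] sqnorm_def Re_sum
    by (simp add: cmod_power2 flip: power2_eq_square)
  also have "\<dots> = Re (\<Sum>k\<in>B. cnj (w k) * v k)"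
    unfolding v_def projector_inner_self[OF assms] ..
  also have "\<dots> \<le> (\<Sum>k\<in>B. cmod (cnj (w k) * v k))"
    using complex_Re_le_cmod norm_sum order_trans by blast
  also have "\<dots> = (\<Sum>k\<in>B. \<bar>cmod (w k)\<bar> * \<bar>cmod (v k)\<bar>)"
    by (simp add: norm_mult)
  also have "\<dots> \<le> qnorm B w * qnorm B v"
    unfolding qnorm_def by (rule L2_set_mult_ineq)
  finally have "(qnorm B v)\<^sup>2 \<le> qnorm B w * qnorm B v" .
  then show ?thesis
    unfolding v_def[symmetric]
    by (metis mult_right_le_imp_le order_le_less power2_eq_square qnorm_nonneg)
qed

lemma finite_qbasis_set: "finite (qbasis_set m c d)"
proof (rule finite_subset)
  show "qbasis_set m c d \<subseteq> {Ss. set Ss \<subseteq> Pow {..<m} \<and> length Ss = c}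
      \<times> {b. set b \<subseteq> (UNIV :: bool set) \<and> length b = c} \<times> {..<d}"
    unfolding qbasis_set_def by auto
  show "finite \<dots>"
    by (intro finite_cartesian_product finite_lists_length_eq) auto
qed

definition query_answers :: "bool list \<Rightarrow> nat set list \<Rightarrow> bool list" where
  "query_answers z Ss = map (\<lambda>S. AND_S S z) Ss"

definition query_perm :: "bool list \<Rightarrow> qbasis \<Rightarrow> qbasis" where
  "query_perm z = (\<lambda>(Ss, b, w). (Ss, map2 (\<noteq>) b (query_answers z Ss), w))"

lemma query_op_eq: "query_op z \<psi> x = \<psi> (query_perm z x)"
  unfolding query_op_def query_perm_def query_answers_def by (cases x) auto

lemma fst_query_perm [simp]: "fst (query_perm z x) = fst x"
  unfolding query_perm_def by (cases x) auto

lemma query_perm_in_qbasis_set: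
  "x \<in> qbasis_set m c d \<Longrightarrow> query_perm z x \<in> qbasis_set m c d"
  unfolding qbasis_set_def query_perm_def query_answers_def by auto

lemma map2_xor_xor: "length b = length g \<Longrightarrow> map2 (\<noteq>) (map2 (\<noteq>) b g) g = b"
  by (induction b g rule: list_induct2) auto

lemma query_perm_query_perm:
  assumes "x \<in> qbasis_set m c d"
  shows "query_perm z (query_perm z x) = x"
proof (cases x)
  case (fields Ss b w)
  with assms have "length b = length (query_answers z Ss)"
    unfolding qbasis_set_def query_answers_def by simp
  with fields show ?thesis
    unfolding query_perm_def by (simp only: prod.case map2_xor_xor)
qed

lemma sum_query_op_reindex:
  "(\<Sum>x\<in>qbasis_set m c d. F (fst x) * (cmod (query_op z \<psi> x))\<^sup>2)
   = (\<Sum>x\<in>qbasis_set m c d. F (fst x) * (cmod (\<psi> x))\<^sup>2)"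
  unfolding query_op_eq
  by (rule sum.reindex_bij_witness[where i="query_perm z" and j="query_perm z"])
     (auto simp: query_perm_in_qbasis_set query_perm_query_perm)

subsection \<open>Distinguishing two inputs costs query weight\<close>

definition query_weight ::
    "nat \<Rightarrow> nat \<Rightarrow> nat \<Rightarrow> (qbasis \<Rightarrow> complex) \<Rightarrow> bool list \<Rightarrow> bool list \<Rightarrow> real" where
  "query_weight m c d \<psi> z z' = (\<Sum>x\<in>qbasis_set m c d.
     of_bool (query_answers z (fst x) \<noteq> query_answers z' (fst x)) * (cmod (\<psi> x))\<^sup>2)"

lemma cmod_diff_sq_le: "(cmod (p - q))\<^sup>2 \<le> 2 * (cmod p)\<^sup>2 + 2 * (cmod q)\<^sup>2"
proof -
  have "(cmod (p - q))\<^sup>2 \<le> (cmod p + cmod q)\<^sup>2"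
    by (simp add: norm_triangle_ineq4 power_mono)
  also have "\<dots> \<le> 2 * (cmod p)\<^sup>2 + 2 * (cmod q)\<^sup>2"
    using zero_le_power2[of "cmod p - cmod q"] unfolding power2_sum power2_diff by linarith
  finally show ?thesis .
qed

lemma qnorm_query_op_diff_sq_le:
  "(qnorm (qbasis_set m c d) (\<lambda>x. query_op z \<psi> x - query_op z' \<psi> x))\<^sup>2
     \<le> 4 * query_weight m c d \<psi> z z'"
proof -
  define B where "B = qbasis_set m c d"
  define hit :: "nat set list \<Rightarrow> real" where
    "hit Ss = of_bool (query_answers z Ss \<noteq> query_answers z' Ss)" for Ss
  define u v where "u = query_op z \<psi>" and "v = query_op z' \<psi>"
  have "(qnorm B (\<lambda>x. u x - v x))\<^sup>2 = (\<Sum>x\<in>B. (cmod (u x - v x))\<^sup>2)"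
    by (simp add: sqnorm_eq_qnorm_sq[symmetric] sqnorm_def)
  also have "\<dots> \<le> (\<Sum>x\<in>B. hit (fst x) * (2 * (cmod (u x))\<^sup>2 + 2 * (cmod (v x))\<^sup>2))"
  proof (rule sum_mono)
    fix x :: qbasis
    have "u x = v x" if "query_answers z (fst x) = query_answers z' (fst x)"
      using that unfolding u_def v_def query_op_eq query_perm_def by (cases x) simp
    then show "(cmod (u x - v x))\<^sup>2 \<le> hit (fst x) * (2 * (cmod (u x))\<^sup>2 + 2 * (cmod (v x))\<^sup>2)"
      unfolding hit_def using cmod_diff_sq_le[of "u x" "v x"] by auto
  qed
  also have "\<dots> = 2 * (\<Sum>x\<in>B. hit (fst x) * (cmod (u x))\<^sup>2)
                  + 2 * (\<Sum>x\<in>B. hit (fst x) * (cmod (v x))\<^sup>2)"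
    by (simp add: distrib_left sum.distrib sum_distrib_left mult.left_commute)
  also have "\<dots> = 4 * query_weight m c d \<psi> z z'"
    unfolding u_def v_def B_def sum_query_op_reindex by (simp add: query_weight_def hit_def)
  finally show ?thesis unfolding u_def v_def B_def .
qed

lemma separation_arith:
  fixes A V D W :: real
  assumes "0 \<le> A" "0 \<le> V" "2/3 \<le> A\<^sup>2" "V\<^sup>2 \<le> 1/3" "A \<le> V + D" "D\<^sup>2 \<le> 4 * W"
  shows "1/100 \<le> W"
proof -
  have "(4/5)\<^sup>2 \<le> A\<^sup>2"
    using assms(3) by (simp add: power_divide)
  then have "4/5 \<le> A"
    using assms(1) by (rule power2_le_imp_le)
  have "V\<^sup>2 \<le> (3/5)\<^sup>2"
    using assms(4) by (simp add: power_divide)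
  then have "V \<le> 3/5"
    by (rule power2_le_imp_le) simp
  have "1/5 \<le> D"
    using \<open>4/5 \<le> A\<close> \<open>V \<le> 3/5\<close> assms(5) by linarith
  then have "(1/5)\<^sup>2 \<le> D\<^sup>2"
    by (rule power_mono) simp
  with assms(6) show ?thesis
    by (simp add: power_divide)
qed

lemma query_weight_ge_if_distinguishes:
  assumes P: "is_projector (qbasis_set m c d) P"
    and accept: "2/3 \<le> accept_prob m c d \<psi> P z"
    and reject: "2/3 \<le> 1 - accept_prob m c d \<psi> P z'"
  shows "1/100 \<le> query_weight m c d \<psi> z z'"
proof -
  define B where "B = qbasis_set m c d"
  define u v where "u = query_op z \<psi>" and "v = query_op z' \<psi>"
  have "qnorm B (apply_op B P u)
        \<le> qnorm B (apply_op B P v) + qnorm B (apply_op B P (\<lambda>y. u y - v y))"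
    using qnorm_add_le[of B "apply_op B P v" "apply_op B P (\<lambda>y. u y - v y)"]
    by (simp add: apply_op_diff)
  also have "\<dots> \<le> qnorm B (apply_op B P v) + qnorm B (\<lambda>y. u y - v y)"
    using qnorm_apply_projector_le[OF P] unfolding B_def by simp
  finally have triangle: "qnorm B (apply_op B P u)
                          \<le> qnorm B (apply_op B P v) + qnorm B (\<lambda>y. u y - v y)" .
  show ?thesis
  proof (rule separation_arith[OF qnorm_nonneg qnorm_nonneg _ _ triangle])
    show "2/3 \<le> (qnorm B (apply_op B P u))\<^sup>2"
      using accept unfolding accept_prob_def sqnorm_eq_qnorm_sq B_def u_def .
    show "(qnorm B (apply_op B P v))\<^sup>2 \<le> 1/3"
      using reject unfolding accept_prob_def sqnorm_eq_qnorm_sq B_def v_def by simp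
    show "(qnorm B (\<lambda>y. u y - v y))\<^sup>2 \<le> 4 * query_weight m c d \<psi> z z'"
      unfolding B_def u_def v_def by (rule qnorm_query_op_diff_sq_le)
  qed
qed

subsection \<open>Lower bound for the address function\<close>

fun to_bin :: "nat \<Rightarrow> nat \<Rightarrow> bool list" where
  "to_bin 0 a = []"
| "to_bin (Suc k) a = to_bin k (a div 2) @ [odd a]"

lemma length_to_bin [simp]: "length (to_bin k a) = k"
  by (induction k arbitrary: a) auto

lemma bin_snoc: "bin (xs @ [x]) = 2 * bin xs + of_bool x"
  unfolding bin_def by simp

lemma bin_to_bin: "bin (to_bin k a) = a mod 2^k"
proof (induction k arbitrary: a)
  case 0
  then show ?case by (simp add: bin_def)
next
  case (Suc k)
  have "a mod 2^Suc k = 2 * (a div 2 mod 2^k) + a mod 2"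
    by (simp add: mod_mult2_eq)
  then show ?case
    using Suc by (simp add: bin_snoc of_bool_odd_eq_mod_2)
qed

definition unit_input :: "nat \<Rightarrow> nat \<Rightarrow> nat \<Rightarrow> bool list" where
  "unit_input k n a = to_bin k a @ map (\<lambda>i. i = a) [0..<n]"

definition zero_input :: "nat \<Rightarrow> nat \<Rightarrow> nat \<Rightarrow> bool list" where
  "zero_input k n a = to_bin k a @ replicate n False"

lemma length_unit_input [simp]: "length (unit_input k n a) = k + n"
  by (simp add: unit_input_def)

lemma length_zero_input [simp]: "length (zero_input k n a) = k + n"
  by (simp add: zero_input_def)

lemma ADDR_unit_input: "a < 2^k \<Longrightarrow> ADDR k (unit_input k (2^k) a)"
  by (simp add: ADDR_def unit_input_def bin_to_bin)

lemma ADDR_zero_input: "\<not> ADDR k (zero_input k (2^k) a)"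
  by (simp add: ADDR_def zero_input_def bin_to_bin)

lemma Max_eq_if_AND_S_distinguishes:
  assumes a: "a < n" and S: "S \<subseteq> {..<k + n}"
    and neq: "AND_S S (unit_input k n a) \<noteq> AND_S S (zero_input k n a)"
  shows "Max S = k + a"
proof -
  define zu zo where "zu = unit_input k n a" and "zo = zero_input k n a"
  have address_bits: "zu ! i = zo ! i" if "i < k" for i
    using that by (simp add: zu_def zo_def unit_input_def zero_input_def nth_append)
  have data_bits: "zu ! i = (i = k + a) \<and> \<not> zo ! i" if "k \<le> i" "i < k + n" for i
    using that a by (auto simp: zu_def zo_def unit_input_def zero_input_def nth_append)
  obtain j where j: "j \<in> S" "k \<le> j"
    using neq address_bits unfolding AND_S_def zu_def[symmetric] zo_def[symmetric]
    by (metis not_le)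
  then have "\<not> AND_S S zo"
    using S data_bits unfolding AND_S_def by blast
  with neq have all_set: "\<forall>i\<in>S. zu ! i"
    unfolding AND_S_def zu_def zo_def by auto
  have le: "i \<le> k + a" if "i \<in> S" for i
    using that all_set S data_bits[of i] by (cases "i < k") auto
  have "k + a \<in> S"
    using j all_set S data_bits by auto
  moreover have "finite S"
    using S by (rule finite_subset) simp
  ultimately show ?thesis
    using le by (intro Max_eqI)
qed

lemma card_distinguished_addresses_le:
  assumes "\<forall>S\<in>set Ss. S \<subseteq> {..<k + n}"
  shows "card {a\<in>{..<n}. query_answers (unit_input k n a) Ss \<noteq> query_answers (zero_input k n a) Ss}
           \<le> length Ss"
proof -
  have "{a\<in>{..<n}. query_answers (unit_input k n a) Ss \<noteq> query_answers (zero_input k n a) Ss}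
          \<subseteq> (\<lambda>S. Max S - k) ` set Ss"
  proof
    fix a
    assume "a \<in> {a\<in>{..<n}. query_answers (unit_input k n a) Ss \<noteq> query_answers (zero_input k n a) Ss}"
    then obtain S where S: "S \<in> set Ss"
      and "a < n" "AND_S S (unit_input k n a) \<noteq> AND_S S (zero_input k n a)"
      unfolding query_answers_def by (auto simp: map_eq_conv)
    with assms have "Max S = k + a"
      by (intro Max_eq_if_AND_S_distinguishes) simp_all
    then have "a = Max S - k"
      by simp
    with S show "a \<in> (\<lambda>S. Max S - k) ` set Ss"
      by blast
  qed
  then have "card {a\<in>{..<n}. query_answers (unit_input k n a) Ss \<noteq> query_answers (zero_input k n a) Ss}
               \<le> card ((\<lambda>S. Max S - k) ` set Ss)"
    by (intro card_mono) simp_all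
  also have "\<dots> \<le> card (set Ss)"
    by (rule card_image_le) simp
  also have "\<dots> \<le> length Ss"
    by (rule card_length)
  finally show ?thesis .
qed

lemma sum_of_bool_mult_le_card_bound:
  fixes f :: "'b \<Rightarrow> real"
  assumes "finite A"
    and card_le: "\<And>x. x \<in> B \<Longrightarrow> card {a\<in>A. H a x} \<le> c"
    and nonneg: "\<And>x. x \<in> B \<Longrightarrow> 0 \<le> f x"
  shows "(\<Sum>a\<in>A. \<Sum>x\<in>B. of_bool (H a x) * f x) \<le> c * (\<Sum>x\<in>B. f x)"
proof -
  have "(\<Sum>a\<in>A. \<Sum>x\<in>B. of_bool (H a x) * f x) = (\<Sum>x\<in>B. (\<Sum>a\<in>A. of_bool (H a x)) * f x)"
    by (subst sum.swap) (simp only: sum_distrib_right)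
  also have "\<dots> = (\<Sum>x\<in>B. real (card {a\<in>A. H a x}) * f x)"
    using assms(1) by (simp add: Int_def)
  also have "\<dots> \<le> (\<Sum>x\<in>B. c * f x)"
    using card_le nonneg by (intro sum_mono mult_right_mono) simp_all
  finally show ?thesis by (simp add: sum_distrib_left)
qed

lemma qnaadt_computes_ADDR_lower:
  assumes "qnaadt_computes (k + 2^k) (ADDR k) c"
  shows "real (2^k) \<le> 100 * real c"
proof -
  define n m where "n = (2::nat)^k" and "m = k + n"
  obtain d \<psi> P where norm: "sqnorm (qbasis_set m c d) \<psi> = 1"
    and P: "is_projector (qbasis_set m c d) P"
    and correct: "\<And>z. length z = m \<Longrightarrow> (if ADDR k z then accept_prob m c d \<psi> P z \<ge> 2/3
                                          else 1 - accept_prob m c d \<psi> P z \<ge> 2/3)"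
    using assms unfolding qnaadt_computes_def m_def n_def by blast
  have "real n / 100 = (\<Sum>a<n. 1/100)"
    by simp
  also have "\<dots> \<le> (\<Sum>a<n. query_weight m c d \<psi> (unit_input k n a) (zero_input k n a))"
  proof (rule sum_mono)
    fix a assume "a \<in> {..<n}"
    then show "1/100 \<le> query_weight m c d \<psi> (unit_input k n a) (zero_input k n a)"
      using correct[of "unit_input k n a"] correct[of "zero_input k n a"]
        ADDR_unit_input[of a k] ADDR_zero_input[of k a]
      by (intro query_weight_ge_if_distinguishes[OF P]) (simp_all add: m_def n_def)
  qed
  also have "\<dots> \<le> c * sqnorm (qbasis_set m c d) \<psi>"
    unfolding query_weight_def sqnorm_def
  proof (rule sum_of_bool_mult_le_card_bound)
    fix x assume "x \<in> qbasis_set m c d"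
    then show "card {a\<in>{..<n}. query_answers (unit_input k n a) (fst x)
                                \<noteq> query_answers (zero_input k n a) (fst x)} \<le> c"
      using card_distinguished_addresses_le[of "fst x" k n]
      by (auto simp: qbasis_set_def m_def)
  qed simp_all
  finally show ?thesis
    using norm by (simp add: n_def)
qed

subsection \<open>Upper bound: querying every bit separately\<close>

definition ket :: "qbasis \<Rightarrow> qbasis \<Rightarrow> complex" where
  "ket p x = (if x = p then 1 else 0)"

definition diagonal_projector :: "(qbasis \<Rightarrow> bool) \<Rightarrow> qbasis \<Rightarrow> qbasis \<Rightarrow> complex" where
  "diagonal_projector Q x y = (if x = y \<and> Q x then 1 else 0)"

lemma is_projector_diagonal_projector:
  assumes "finite B"
  shows "is_projector B (diagonal_projector Q)"
  unfolding is_projector_def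
proof (intro conjI ballI)
  fix x y
  show "diagonal_projector Q x y = cnj (diagonal_projector Q y x)"
    by (auto simp: diagonal_projector_def)
  assume "x \<in> B"
  have "(\<Sum>k\<in>B. diagonal_projector Q x k * diagonal_projector Q k y)
          = (\<Sum>k\<in>B. if k = x then diagonal_projector Q x y else 0)"
    by (intro sum.cong) (auto simp: diagonal_projector_def)
  also have "\<dots> = diagonal_projector Q x y"
    using \<open>x \<in> B\<close> assms by simp
  finally show "(\<Sum>k\<in>B. diagonal_projector Q x k * diagonal_projector Q k y)
                 = diagonal_projector Q x y" .
qed

lemma query_op_ket:
  assumes "p \<in> qbasis_set m c d" and "x \<in> qbasis_set m c d"
  shows "query_op z (ket p) x = ket (query_perm z p) x"
  using assms query_perm_query_perm query_perm_in_qbasis_set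
  unfolding query_op_eq ket_def by metis

lemma accept_prob_ket_diagonal_projector:
  assumes p: "p \<in> qbasis_set m c d"
  shows "accept_prob m c d (ket p) (diagonal_projector Q) z = of_bool (Q (query_perm z p))"
proof -
  define B where "B = qbasis_set m c d"
  define q where "q = query_perm z p"
  have q: "q \<in> B" and B: "finite B"
    unfolding q_def B_def by (rule query_perm_in_qbasis_set[OF p], rule finite_qbasis_set)
  have "apply_op B (diagonal_projector Q) (query_op z (ket p)) x = diagonal_projector Q x q" for x
  proof -
    have "apply_op B (diagonal_projector Q) (query_op z (ket p)) x
            = (\<Sum>y\<in>B. if y = q then diagonal_projector Q x y else 0)"
      unfolding apply_op_def using query_op_ket[OF p]
      by (intro sum.cong) (auto simp: B_def q_def ket_def)
    then show ?thesis
      using q B by simp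
  qed
  then have "accept_prob m c d (ket p) (diagonal_projector Q) z
               = (\<Sum>x\<in>B. if x = q then of_bool (Q q) else 0)"
    unfolding accept_prob_def sqnorm_def B_def[symmetric]
    by (intro sum.cong) (auto simp: diagonal_projector_def)
  also have "\<dots> = of_bool (Q q)"
    using q B by simp
  finally show ?thesis
    unfolding q_def .
qed

lemma map2_xor_replicate_False: "map2 (\<noteq>) (replicate (length z) False) z = z"
  by (induction z) auto

lemma qnaadt_computes_self: "qnaadt_computes m f m"
proof -
  define Ss where "Ss = map (\<lambda>i. {i}) [0..<m]"
  define p :: qbasis where "p = (Ss, replicate m False, 0)"
  have p: "p \<in> qbasis_set m m 1"
    by (auto simp: p_def Ss_def qbasis_set_def)
  have query_perm_p: "query_perm z p = (Ss, z, 0)" if "length z = m" for z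
  proof -
    have "query_answers z Ss = z"
      using map_nth[of z] that[symmetric] by (simp add: query_answers_def Ss_def AND_S_def o_def)
    then show ?thesis
      using that map2_xor_replicate_False[of z] by (simp add: query_perm_def p_def)
  qed
  have "accept_prob m m 1 (ket p) (diagonal_projector (\<lambda>x. f (fst (snd x)))) z = of_bool (f z)"
    if "length z = m" for z
    unfolding accept_prob_ket_diagonal_projector[OF p] using query_perm_p[OF that] by simp
  moreover have "sqnorm (qbasis_set m m 1) (ket p) = 1"
  proof -
    have "(cmod (ket p x))\<^sup>2 = (if x = p then 1 else 0)" for x
      by (simp add: ket_def)
    then show ?thesis
      using p finite_qbasis_set[of m m 1] by (simp add: sqnorm_def)
  qed
  ultimately show ?thesis
    unfolding qnaadt_computes_def
    by (intro exI[of _ 1] exI[of _ "ket p"] exI[of _ "diagonal_projector (\<lambda>x. f (fst (snd x)))"])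
       (simp add: is_projector_diagonal_projector finite_qbasis_set)
qed

lemma qnaadt_computes_QNAADT: "qnaadt_computes m f (QNAADT m f)"
  unfolding QNAADT_def by (rule LeastI[OF qnaadt_computes_self])

lemma QNAADT_le: "QNAADT m f \<le> m"
  unfolding QNAADT_def by (rule Least_le[OF qnaadt_computes_self])

theorem claimA2:
  shows "\<exists>c1>0. \<exists>c2>0. \<forall>k\<ge>1.
           c1 * real (2^k) \<le> real (QNAADT (k + 2^k) (ADDR k)) \<and>
           real (QNAADT (k + 2^k) (ADDR k)) \<le> c2 * real (2^k)"
proof -
  have "1/100 * real (2^k) \<le> real (QNAADT (k + 2^k) (ADDR k))" for k
    using qnaadt_computes_ADDR_lower[OF qnaadt_computes_QNAADT, of k] by linarith
  moreover have "real (QNAADT (k + 2^k) (ADDR k)) \<le> 2 * real (2^k)" for k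
  proof -
    have "QNAADT (k + 2^k) (ADDR k) \<le> 2 * 2^k"
      using QNAADT_le[of "k + 2^k" "ADDR k"] less_exp[of k] by linarith
    then show ?thesis
      using of_nat_mono[where 'a=real] by fastforce
  qed
  moreover have "(0::real) < 1/100" "(0::real) < 2"
    by simp_all
  ultimately show ?thesis
    by blast
qed

end
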